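(* Let $N$ be an acyclic CP-net over features $X_1,\dots,X_n$ with finite domains, and let $\mathrm{pen}$ be the penalty function of the weighted soft-constraint approximation of $N$ defined in the context. Then for all outcomes $\alpha,\beta$, if $\alpha \succ_N \beta$ then $\mathrm{pen}(\alpha) < \mathrm{pen}(\beta)$.
   Context: A CP-net $N$ consists of a directed graph on the features, where $Pa(X)$ denotes the set of parents of $X$, together with, for every feature $X$ and every assignment $u$ to $Pa(X)$, a strict total order $\succ_{X,u}$ on $D(X)$. $N$ is acyclic if its graph is acyclic. An outcome is a complete assignment to all features. The relation $\succ_N$ is the transitive closure of improving flips: $\alpha$ is obtained from $\beta$ by an improving flip if $\alpha$ and $\beta$ differ only on one feature $X$ and $\alpha(X) \succ_{X,u} \beta(X)$, where $u$ is the common restriction of $\alpha,\beta$ to $Pa(X)$. Weighted approximation: for a feature $X$, a parent assignment $u$ and $x\in D(X)$, let $p_u(x)\in\{0,\dots,|D(X)|-1\}$ be the number of values of $D(X)$ strictly above $x$ in $\succ_{X,u}$. Weights are defined by processing the features in a reverse topological order of the graph of $N$: $w(X)=1$ if $X$ has no children, and otherwise $w(X)=\sum_{Y:\,X\in Pa(Y)} w(Y)\cdot|D(Y)|$. For an outcome $\alpha$, $\mathrm{pen}(\alpha)=\sum_{X} w(X)\cdot p_{\alpha|_{Pa(X)}}(\alpha(X))$, where $\alpha|_{Pa(X)}$ is the restriction of $\alpha$ to $Pa(X)$. (This is the weighted/min+ soft constraint problem, with one soft constraint on $\{X\}\cup Pa(X)$ for each feature $X$; smaller total penalty means more preferred.)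 *)

theory Defs
  imports Main "HOL-Library.FuncSet"
begin

text \<open>A CP-net over a finite type of features 'f with values of type 'v:
  Pa X  -- the parents of feature X,
  D X   -- the (finite) domain of X,
  ord X u -- the strict total order on D X for the parent assignment u;
         (y, x) \<in> ord X u means y is preferred to x.
  A parent assignment u is a function 'f \<Rightarrow> 'v restricted to Pa X
  (value undefined outside Pa X), i.e. an element of PiE (Pa X) D.\<close>

definition dep_graph :: "('f \<Rightarrow> 'f set) \<Rightarrow> 'f rel" where
  "dep_graph Pa = {(Y, X). Y \<in> Pa X}"

definition cp_net :: "('f \<Rightarrow> 'f set) \<Rightarrow> ('f \<Rightarrow> 'v set) \<Rightarrow> ('f \<Rightarrow> ('f \<Rightarrow> 'v) \<Rightarrow> 'v rel) \<Rightarrow> bool" where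
  "cp_net Pa D ord \<longleftrightarrow>
     (\<forall>X. \<forall>u \<in> PiE (Pa X) D. strict_linear_order_on (D X) (ord X u))"

definition acyclic_cp_net :: "('f \<Rightarrow> 'f set) \<Rightarrow> ('f \<Rightarrow> 'v set) \<Rightarrow> ('f \<Rightarrow> ('f \<Rightarrow> 'v) \<Rightarrow> 'v rel) \<Rightarrow> bool" where
  "acyclic_cp_net Pa D ord \<longleftrightarrow> cp_net Pa D ord \<and> acyclic (dep_graph Pa)"

definition outcome :: "('f \<Rightarrow> 'v set) \<Rightarrow> ('f \<Rightarrow> 'v) \<Rightarrow> bool" where
  "outcome D \<alpha> \<longleftrightarrow> (\<forall>X. \<alpha> X \<in> D X)"

definition improving_flip :: "('f \<Rightarrow> 'f set) \<Rightarrow> ('f \<Rightarrow> 'v set) \<Rightarrow> ('f \<Rightarrow> ('f \<Rightarrow> 'v) \<Rightarrow> 'v rel)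
    \<Rightarrow> (('f \<Rightarrow> 'v) \<times> ('f \<Rightarrow> 'v)) set" where
  "improving_flip Pa D ord = {(\<alpha>, \<beta>). outcome D \<alpha> \<and> outcome D \<beta> \<and>
     (\<exists>X. (\<forall>Z. Z \<noteq> X \<longrightarrow> \<alpha> Z = \<beta> Z) \<and>
          restrict \<alpha> (Pa X) = restrict \<beta> (Pa X) \<and>
          (\<alpha> X, \<beta> X) \<in> ord X (restrict \<alpha> (Pa X)))}"

definition cp_pref :: "('f \<Rightarrow> 'f set) \<Rightarrow> ('f \<Rightarrow> 'v set) \<Rightarrow> ('f \<Rightarrow> ('f \<Rightarrow> 'v) \<Rightarrow> 'v rel)
    \<Rightarrow> (('f \<Rightarrow> 'v) \<times> ('f \<Rightarrow> 'v)) set" where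
  "cp_pref Pa D ord = (improving_flip Pa D ord)\<^sup>+"

definition children :: "('f \<Rightarrow> 'f set) \<Rightarrow> 'f \<Rightarrow> 'f set" where
  "children Pa X = {Y. X \<in> Pa Y}"

definition weight :: "('f \<Rightarrow> 'f set) \<Rightarrow> ('f \<Rightarrow> 'v set) \<Rightarrow> 'f \<Rightarrow> nat" where
  "weight Pa D = wfrec {(Y, X). X \<in> Pa Y}
     (\<lambda>w X. if children Pa X = {} then 1
            else (\<Sum>Y\<in>children Pa X. w Y * card (D Y)))"

definition rank :: "('f \<Rightarrow> 'v set) \<Rightarrow> ('f \<Rightarrow> ('f \<Rightarrow> 'v) \<Rightarrow> 'v rel) \<Rightarrow> 'f \<Rightarrow> ('f \<Rightarrow> 'v) \<Rightarrow> 'v \<Rightarrow> nat" where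
  "rank D ord X u x = card {y \<in> D X. (y, x) \<in> ord X u}"

definition pen :: "('f::finite \<Rightarrow> 'f set) \<Rightarrow> ('f \<Rightarrow> 'v set) \<Rightarrow> ('f \<Rightarrow> ('f \<Rightarrow> 'v) \<Rightarrow> 'v rel)
    \<Rightarrow> ('f \<Rightarrow> 'v) \<Rightarrow> nat" where
  "pen Pa D ord \<alpha> = (\<Sum>X\<in>UNIV. weight Pa D X * rank D ord X (restrict \<alpha> (Pa X)) (\<alpha> X))"

end

theory Submission
  imports Defs
begin

(* The penalty is a sum of local terms  w(Z) * p(Z), one per feature.
   An improving flip of a feature X changes only the local term of X and the
   local terms of the children of X (whose parent assignment changes); all other
   features keep both their value and their parent assignment.
   The term of X drops by at least w(X), since the rank of X strictly decreases.
   The children's terms can grow by at most their total value, which is strictly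
   below  sum_Y w(Y) * |D(Y)| = w(X),  because every rank is below the domain size.
   Hence every improving flip strictly decreases the penalty, and by induction
   along the transitive closure so does every CP-net preference. *)

lemma wf_child_relation:
  fixes Pa :: "'f::finite \<Rightarrow> 'f set"
  assumes "acyclic (dep_graph Pa)"
  shows "wf {(Y, X). X \<in> Pa Y}"
proof -
  have "{(Y, X). X \<in> Pa Y} = (dep_graph Pa)\<inverse>" by (auto simp: dep_graph_def)
  then show ?thesis
    using finite_acyclic_wf_converse[OF _ assms] by simp
qed

lemma weight_eq:
  fixes Pa :: "'f::finite \<Rightarrow> 'f set"
  assumes "acyclic (dep_graph Pa)"
  shows "weight Pa D X = (if children Pa X = {} then 1
            else (\<Sum>Y\<in>children Pa X. weight Pa D Y * card (D Y)))"
proof -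
  have "weight Pa D X = (if children Pa X = {} then 1
      else (\<Sum>Y\<in>children Pa X. cut (weight Pa D) {(Y, X). X \<in> Pa Y} X Y * card (D Y)))"
    unfolding weight_def by (subst wfrec[OF wf_child_relation[OF assms]]) simp
  also have "\<dots> = (if children Pa X = {} then 1
      else (\<Sum>Y\<in>children Pa X. weight Pa D Y * card (D Y)))"
    by (intro if_cong refl sum.cong) (auto simp: cut_apply children_def)
  finally show ?thesis .
qed

lemma weight_pos:
  fixes Pa :: "'f::finite \<Rightarrow> 'f set"
  assumes acyc: "acyclic (dep_graph Pa)"
    and fin: "\<forall>X. finite (D X)" and nonempty: "\<forall>X. D X \<noteq> {}"
  shows "weight Pa D X \<ge> 1"
  using wf_child_relation[OF acyc]
proof (induction X rule: wf_induct_rule)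
  case (less X)
  show ?case
  proof (cases "children Pa X = {}")
    case True
    then show ?thesis by (simp add: weight_eq[OF acyc])
  next
    case False
    then obtain Y where Y: "Y \<in> children Pa X" by blast
    have "weight Pa D Y \<ge> 1" using less Y by (auto simp: children_def)
    moreover have "card (D Y) \<ge> 1" using fin nonempty by (simp add: Suc_le_eq card_gt_0_iff)
    ultimately have "1 \<le> weight Pa D Y * card (D Y)" by (metis mult_le_mono nat_mult_1)
    also have "\<dots> \<le> (\<Sum>Y\<in>children Pa X. weight Pa D Y * card (D Y))"
      using Y by (intro member_le_sum) auto
    finally show ?thesis using False by (simp add: weight_eq[OF acyc])
  qed
qed

text \<open>A value is never above itself, so its rank is below the domain size.\<close>
lemma rank_less_card:
  assumes "strict_linear_order_on (D X) (ord X u)" "x \<in> D X" "finite (D X)"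
  shows "rank D ord X u x < card (D X)"
proof -
  have "{y \<in> D X. (y, x) \<in> ord X u} \<subset> D X"
    using assms(1,2) by (auto simp: strict_linear_order_on_def irrefl_def)
  then show ?thesis unfolding rank_def using assms(3) by (simp add: psubset_card_mono)
qed

text \<open>Better values have strictly smaller rank: everything above a is above b,
  and a itself is above b but not above a.\<close>
lemma rank_strict_mono:
  assumes "strict_linear_order_on (D X) (ord X u)" "a \<in> D X" "(a, b) \<in> ord X u"
    "finite (D X)"
  shows "rank D ord X u a < rank D ord X u b"
proof -
  have "{y \<in> D X. (y, a) \<in> ord X u} \<subset> {y \<in> D X. (y, b) \<in> ord X u}"
    using assms(1-3) unfolding strict_linear_order_on_def irrefl_def trans_def by blast
  then show ?thesis unfolding rank_def using assms(4) by (simp add: psubset_card_mono)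
qed

definition local_pen :: "('f \<Rightarrow> 'f set) \<Rightarrow> ('f \<Rightarrow> 'v set) \<Rightarrow> ('f \<Rightarrow> ('f \<Rightarrow> 'v) \<Rightarrow> 'v rel)
    \<Rightarrow> ('f \<Rightarrow> 'v) \<Rightarrow> 'f \<Rightarrow> nat" where
  "local_pen Pa D ord \<gamma> Z = weight Pa D Z * rank D ord Z (restrict \<gamma> (Pa Z)) (\<gamma> Z)"

lemma pen_split:
  fixes Pa :: "'f::finite \<Rightarrow> 'f set"
  assumes "X \<notin> children Pa X"
  shows "pen Pa D ord \<gamma> = local_pen Pa D ord \<gamma> X
           + (\<Sum>Y\<in>children Pa X. local_pen Pa D ord \<gamma> Y)
           + (\<Sum>Z\<in>UNIV - {X} - children Pa X. local_pen Pa D ord \<gamma> Z)"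
proof -
  have "pen Pa D ord \<gamma> = (\<Sum>Z\<in>UNIV. local_pen Pa D ord \<gamma> Z)"
    by (simp add: pen_def local_pen_def)
  also have "\<dots> = local_pen Pa D ord \<gamma> X + (\<Sum>Z\<in>UNIV - {X}. local_pen Pa D ord \<gamma> Z)"
    by (simp add: sum.remove)
  also have "(\<Sum>Z\<in>UNIV - {X}. local_pen Pa D ord \<gamma> Z)
      = (\<Sum>Y\<in>children Pa X. local_pen Pa D ord \<gamma> Y)
        + (\<Sum>Z\<in>UNIV - {X} - children Pa X. local_pen Pa D ord \<gamma> Z)"
  proof -
    have "UNIV - {X} = children Pa X \<union> (UNIV - {X} - children Pa X)"
      using assms by auto
    then show ?thesis by (metis Diff_disjoint finite sum.union_disjoint)
  qed
  finally show ?thesis by simp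
qed

text \<open>The children of X together contribute strictly less than the weight of X,
  at any outcome: each rank is below its domain size.\<close>
lemma children_pen_less_weight:
  fixes Pa :: "'f::finite \<Rightarrow> 'f set"
  assumes acyc: "acyclic (dep_graph Pa)" and cp: "cp_net Pa D ord"
    and fin: "\<forall>X. finite (D X)" and out: "outcome D \<gamma>"
  shows "(\<Sum>Y\<in>children Pa X. local_pen Pa D ord \<gamma> Y) < weight Pa D X"
proof -
  have nonempty: "\<forall>X. D X \<noteq> {}" using out by (auto simp: outcome_def)
  show ?thesis
  proof (cases "children Pa X = {}")
    case True
    then show ?thesis using weight_pos[OF acyc fin nonempty, of X] by simp
  next
    case False
    have "(\<Sum>Y\<in>children Pa X. local_pen Pa D ord \<gamma> Y)
        < (\<Sum>Y\<in>children Pa X. weight Pa D Y * card (D Y))"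
    proof (rule sum_strict_mono)
      fix Y
      have "strict_linear_order_on (D Y) (ord Y (restrict \<gamma> (Pa Y)))"
        using cp out by (auto simp: cp_net_def outcome_def)
      then have "rank D ord Y (restrict \<gamma> (Pa Y)) (\<gamma> Y) < card (D Y)"
        using out fin by (intro rank_less_card) (auto simp: outcome_def)
      then show "local_pen Pa D ord \<gamma> Y < weight Pa D Y * card (D Y)"
        using weight_pos[OF acyc fin nonempty, of Y] by (simp add: local_pen_def)
    qed (use False in auto)
    also have "\<dots> = weight Pa D X" using False by (simp add: weight_eq[OF acyc])
    finally show ?thesis .
  qed
qed

lemma local_pen_unchanged:
  assumes "\<forall>Z. Z \<noteq> X \<longrightarrow> \<alpha> Z = \<beta> Z" "Z \<noteq> X" "Z \<notin> children Pa X"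
  shows "local_pen Pa D ord \<alpha> Z = local_pen Pa D ord \<beta> Z"
proof -
  have "restrict \<alpha> (Pa Z) = restrict \<beta> (Pa Z)"
    using assms by (auto simp: children_def restrict_def intro!: ext)
  then show ?thesis using assms by (simp add: local_pen_def)
qed

lemma improving_flip_decreases_pen:
  fixes Pa :: "'f::finite \<Rightarrow> 'f set"
  assumes net: "acyclic_cp_net Pa D ord" and fin: "\<forall>X. finite (D X)"
    and flip: "(\<alpha>, \<beta>) \<in> improving_flip Pa D ord"
  shows "pen Pa D ord \<alpha> < pen Pa D ord \<beta>"
proof -
  have acyc: "acyclic (dep_graph Pa)" and cp: "cp_net Pa D ord"
    using net by (auto simp: acyclic_cp_net_def)
  from flip obtain X where oa: "outcome D \<alpha>"
    and same: "\<forall>Z. Z \<noteq> X \<longrightarrow> \<alpha> Z = \<beta> Z"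
    and parents: "restrict \<alpha> (Pa X) = restrict \<beta> (Pa X)"
    and better: "(\<alpha> X, \<beta> X) \<in> ord X (restrict \<alpha> (Pa X))"
    by (auto simp: improving_flip_def)
  have not_child: "X \<notin> children Pa X"
  proof
    assume "X \<in> children Pa X"
    then have "(X, X) \<in> (dep_graph Pa)\<^sup>+" by (auto simp: children_def dep_graph_def)
    then show False using acyc by (auto simp: acyclic_def)
  qed
  have "strict_linear_order_on (D X) (ord X (restrict \<alpha> (Pa X)))"
    using cp oa by (auto simp: cp_net_def outcome_def)
  then have "rank D ord X (restrict \<alpha> (Pa X)) (\<alpha> X) < rank D ord X (restrict \<alpha> (Pa X)) (\<beta> X)"
    using oa better fin by (intro rank_strict_mono) (auto simp: outcome_def)
  then have "weight Pa D X * (rank D ord X (restrict \<alpha> (Pa X)) (\<alpha> X) + 1)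
      \<le> weight Pa D X * rank D ord X (restrict \<alpha> (Pa X)) (\<beta> X)"
    by (intro mult_le_mono2) simp
  then have gain: "local_pen Pa D ord \<alpha> X + weight Pa D X \<le> local_pen Pa D ord \<beta> X"
    by (simp add: local_pen_def parents algebra_simps)
  have rest: "(\<Sum>Z\<in>UNIV - {X} - children Pa X. local_pen Pa D ord \<alpha> Z)
            = (\<Sum>Z\<in>UNIV - {X} - children Pa X. local_pen Pa D ord \<beta> Z)"
    using same by (intro sum.cong refl local_pen_unchanged) auto
  show ?thesis
    unfolding pen_split[OF not_child, of D ord \<alpha>] pen_split[OF not_child, of D ord \<beta>] rest
    using gain children_pen_less_weight[OF acyc cp fin oa, of X] by linarith
qed

theorem theorem3:
  fixes Pa :: "'f::finite \<Rightarrow> 'f set"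
    and D :: "'f \<Rightarrow> 'v set"
    and ord :: "'f \<Rightarrow> ('f \<Rightarrow> 'v) \<Rightarrow> 'v rel"
    and \<alpha> \<beta> :: "'f \<Rightarrow> 'v"
  assumes "acyclic_cp_net Pa D ord"
    and "\<forall>X. finite (D X)"
    and "(\<alpha>, \<beta>) \<in> cp_pref Pa D ord"
  shows "pen Pa D ord \<alpha> < pen Pa D ord \<beta>"
  using assms(3) unfolding cp_pref_def
proof (induction rule: trancl_induct)
  case (base \<gamma>)
  then show ?case using improving_flip_decreases_pen[OF assms(1,2)] by blast
next
  case (step \<gamma> \<delta>)
  then show ?case using improving_flip_decreases_pen[OF assms(1,2), of \<gamma> \<delta>] by simp
qed

end
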